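(* Let $a,b\in GF(q)\setminus\{0\}$, $a\ne b$, with $b/a$ a square in $GF(q)$, and let $\mathcal B^1_{(s_1,c_1)},\mathcal B^1_{(s_2,c_2)}\in\tau(a,b)$. Then these two circles are tangential to $\mathcal B_a$ in the same point $P$ or in the opposite points $P$ and $-P$, respectively, if and only if $s_1\bar s_2\in GF(q)\setminus\{0\}$. In that case $P$ satisfies $$\frac{P^2}{a}=\frac{s_1}{\bar s_1}=\frac{s_2}{\bar s_2}.$$
   Context: Let $p$ be an odd prime, $m\ge1$, and $q=p^m$. $GF(q^2)$ denotes the quadratic extension of $GF(q)$, and for $z\in GF(q^2)$ we write $\bar z:=z^{q}$. The Miquelian Möbius plane $\mathbb M(q)$ has point set $GF(q^2)\cup\{\infty\}$ and circles of two types: for $s\in GF(q^2)$ and $c\in GF(q)\setminus\{0\}$, the circle of the first type $\mathcal B^1_{(s,c)}=\{z\in GF(q^2):(z-s)(\bar z-\bar s)=c\}$; for $s\in GF(q^2)\setminus\{0\}$ and $c\in GF(q)$, the circle of the second type $\mathcal B^2_{(s,c)}=\{z\in GF(q^2):\bar s z+s\bar z=c\}\cup\{\infty\}$. Two circles are called tangential if they have exactly one point in common. For $a\in GF(q)\setminus\{0\}$ put $\mathcal B_a:=\mathcal B^1_{(0,a)}$, and for $a,b\in GF(q)\setminus\{0\}$ let $\tau(a,b)$ be the set of circles tangential to both $\mathcal B_a$ and $\mathcal B_b$. Note that $P\in\mathcal B_a$ implies $-P\in\mathcal B_a$; $-P$ is called the opposite point of $P$. *)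

theory Defs
  imports "HOL-Computational_Algebra.Primes"
begin

text \<open>The field GF(q^2) is modelled as a finite field type 'a with CARD('a) = q^2;
  GF(q) is its unique subfield of order q, i.e. the fixed points of z \<mapsto> z^q.
  Points of the Moebius plane are 'a option, with None playing the role of infinity.\<close>

definition conjq :: "nat \<Rightarrow> 'a::{field,finite} \<Rightarrow> 'a" where
  "conjq q z = z ^ q"

definition GFq :: "nat \<Rightarrow> 'a::{field,finite} set" where
  "GFq q = {z. z ^ q = z}"

definition circ1 :: "nat \<Rightarrow> 'a::{field,finite} \<Rightarrow> 'a \<Rightarrow> 'a option set" where
  "circ1 q s c = Some ` {z. (z - s) * (conjq q z - conjq q s) = c}"

definition circ2 :: "nat \<Rightarrow> 'a::{field,finite} \<Rightarrow> 'a \<Rightarrow> 'a option set" where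
  "circ2 q s c = insert None (Some ` {z. conjq q s * z + s * conjq q z = c})"

definition circles :: "nat \<Rightarrow> ('a::{field,finite}) option set set" where
  "circles q = {circ1 q s c | s c. c \<in> GFq q \<and> c \<noteq> 0}
             \<union> {circ2 q s c | s c. s \<noteq> 0 \<and> c \<in> GFq q}"

definition tangential :: "'a option set \<Rightarrow> 'a option set \<Rightarrow> bool" where
  "tangential A B \<longleftrightarrow> card (A \<inter> B) = 1"

definition Bcirc :: "nat \<Rightarrow> 'a::{field,finite} \<Rightarrow> 'a option set" where
  "Bcirc q a = circ1 q 0 a"

definition tau :: "nat \<Rightarrow> 'a::{field,finite} \<Rightarrow> 'a \<Rightarrow> ('a option) set set" where
  "tau q a b = {C \<in> circles q. tangential C (Bcirc q a) \<and> tangential C (Bcirc q b)}"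

end

theory Submission
  imports Defs "HOL-Number_Theory.Residues"
begin

text \<open>Negation \<open>z \<mapsto> -z\<close> and the reflection \<open>z \<mapsto> s z\<^sup>q / s\<^sup>q\<close> in the line through
  \<open>0\<close> and \<open>s\<close> both map \<open>\<B>\<^sub>a\<close> and the circle centred at \<open>s\<close> onto themselves, so they fix the
  unique point \<open>P\<close> where the two circles touch. Since the characteristic is odd, negation has no
  fixed point on \<open>\<B>\<^sub>a\<close>, whence \<open>s \<noteq> 0\<close>; and the reflection fixes \<open>P\<close> exactly when
  \<open>s / s\<^sup>q = P / P\<^sup>q = P\<^sup>2 / a\<close>. Hence \<open>s\<^sub>1 / s\<^sub>1\<^sup>q = s\<^sub>2 / s\<^sub>2\<^sup>q\<close>, i.e.\ \<open>s\<^sub>1 s\<^sub>2\<^sup>q\<close> is fixed by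
  the Frobenius, iff \<open>P\<^sub>1\<^sup>2 = P\<^sub>2\<^sup>2\<close>.\<close>

text \<open>The library's \<open>finite_field_power_card_eq_same\<close> is stated for the sort \<open>finite_field\<close>,
  which a type of sort \<open>{field,finite}\<close> is not known to have.\<close>

lemma power_card_UNIV_eq_self:
  fixes x :: "'a::{field,finite}"
  shows "x ^ card (UNIV :: 'a set) = x"
proof (cases "x = 0")
  case False
  have "(\<Prod>y\<in>UNIV-{0}. x * y) = (\<Prod>y\<in>UNIV-{0}. y)"
    by (rule prod.reindex_bij_witness[of _ "\<lambda>y. y / x" "\<lambda>y. x * y"]) (use False in auto)
  then have "x ^ (card (UNIV :: 'a set) - 1) = 1"
    by (simp add: prod.distrib card_Diff_singleton)
  then show ?thesis
    using finite_UNIV_card_ge_0[where 'a = 'a] by (simp add: power_eq_if)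
qed (use finite_UNIV_card_ge_0[where 'a = 'a] in simp)

lemma two_neq_zero_if_odd_card:
  assumes "odd (card (UNIV :: 'a::{field,finite} set))"
  shows "(2::'a) \<noteq> 0"
proof
  assume two: "(2::'a) = 0"
  obtain k where k: "card (UNIV :: 'a set) = 2 * k + 1" using assms oddE by blast
  have "of_nat (card (UNIV :: 'a set)) = (0::'a)"
    by (simp add: of_nat_eq_0_iff_char_dvd CHAR_dvd_CARD)
  with two show False by (simp add: k)
qed

lemma conjq_mult: "conjq q (x * y) = conjq q x * conjq q (y::'a::{field,finite})"
  by (simp add: conjq_def power_mult_distrib)

lemma conjq_divide: "conjq q (x / y) = conjq q x / conjq q (y::'a::{field,finite})"
  by (simp add: conjq_def power_divide)

lemma conjq_eq_0_iff: "q > 0 \<Longrightarrow> conjq q x = 0 \<longleftrightarrow> x = (0::'a::{field,finite})"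
  by (simp add: conjq_def)

lemma conjq_minus: "odd q \<Longrightarrow> conjq q (- x) = - conjq q (x::'a::{field,finite})"
  by (simp add: conjq_def power_minus_odd)

lemma conjq_conjq:
  assumes "card (UNIV :: 'a::{field,finite} set) = q ^ 2"
  shows "conjq q (conjq q z) = (z::'a)"
  using power_card_UNIV_eq_self[of z] assms by (simp add: conjq_def power2_eq_square power_mult)

lemma mult_conjq_mem_GFq_iff:
  assumes "card (UNIV :: 'a::{field,finite} set) = q ^ 2"
  shows "x * conjq q y \<in> GFq q \<longleftrightarrow> conjq q x * y = x * conjq q (y::'a)"
  using conjq_conjq[OF assms]
  by (auto simp: GFq_def conjq_mult conjq_def[symmetric] mult.commute)

lemma Some_mem_circ1_iff: "Some z \<in> circ1 q s c \<longleftrightarrow> (z - s) * (conjq q z - conjq q s) = c"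
  by (auto simp: circ1_def)

lemma uminus_mem_circ1:
  assumes "odd q" "Some z \<in> circ1 q s c"
  shows "Some (- z) \<in> circ1 q (- s) c"
  using assms by (simp add: Some_mem_circ1_iff conjq_minus) (simp add: algebra_simps)

definition line_reflection :: "nat \<Rightarrow> 'a::{field,finite} \<Rightarrow> 'a \<Rightarrow> 'a" where
  "line_reflection q s z = s * conjq q z / conjq q s"

lemma line_reflection_mem_circ1:
  assumes "card (UNIV :: 'a::{field,finite} set) = q ^ 2" "q > 0" "s \<noteq> 0"
    and "Some z \<in> circ1 q t c"
  shows "Some (line_reflection q s z) \<in> circ1 q (line_reflection q s t) (c::'a)"
proof -
  define S where "S = conjq q s"
  have S: "S \<noteq> 0" using assms(2,3) by (simp add: S_def conjq_eq_0_iff)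
  have "conjq q (line_reflection q s w) = S * w / s" for w
    by (simp add: S_def line_reflection_def conjq_divide conjq_mult conjq_conjq[OF assms(1)])
  then have "(line_reflection q s z - line_reflection q s t)
      * (conjq q (line_reflection q s z) - conjq q (line_reflection q s t))
      = (s * (conjq q z - conjq q t) / S) * (S * (z - t) / s)"
    by (simp add: line_reflection_def S_def diff_divide_distrib right_diff_distrib)
  also have "\<dots> = (z - t) * (conjq q z - conjq q t)"
    using S assms(3) by simp
  finally show ?thesis
    using assms(4) by (simp add: Some_mem_circ1_iff)
qed

lemma Some_mem_Bcirc_iff: "q > 0 \<Longrightarrow> Some z \<in> Bcirc q a \<longleftrightarrow> z * conjq q z = a"
  by (simp add: Bcirc_def Some_mem_circ1_iff conjq_def zero_power)

lemma tangent_point_Bcirc: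
  fixes s c a P :: "'a::{field,finite}"
  assumes card: "card (UNIV :: 'a set) = q ^ 2" and q: "odd q" and a: "a \<noteq> 0"
    and tangent: "tangential (circ1 q s c) (Bcirc q a)"
    and P: "Some P \<in> circ1 q s c \<inter> Bcirc q a"
  shows "s \<noteq> 0 \<and> s * conjq q P = conjq q s * P"
proof -
  have q0: "q > 0" using q by (simp add: odd_pos)
  obtain X where X: "circ1 q s c \<inter> Bcirc q a = {X}"
    using tangent by (auto simp: tangential_def card_1_singleton_iff)
  have unique: "Q = P" if "Some Q \<in> circ1 q s c \<inter> Bcirc q a" for Q
    using P that by (auto simp: X)
  have s: "s \<noteq> 0"
  proof
    assume "s = 0"
    then have "Some (- P) \<in> circ1 q s c \<inter> Bcirc q a"
      using P uminus_mem_circ1[OF q] by (fastforce simp: Bcirc_def)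
    then have "- P = P" by (rule unique)
    moreover have "(2::'a) \<noteq> 0" using card q by (intro two_neq_zero_if_odd_card) simp
    ultimately have "P = 0" by (simp add: minus_equation_iff flip: mult_2)
    with P a q0 show False by (simp add: Some_mem_Bcirc_iff conjq_def)
  qed
  have S: "conjq q s \<noteq> 0" using s q0 by (simp add: conjq_eq_0_iff)
  have "line_reflection q s s = s" "line_reflection q s 0 = 0"
    using S q0 by (simp_all add: line_reflection_def conjq_def)
  then have "Some (line_reflection q s P) \<in> circ1 q s c \<inter> Bcirc q a"
    using P line_reflection_mem_circ1[OF card q0 s] by (metis Bcirc_def IntD1 IntD2 IntI)
  then have "line_reflection q s P = P" by (rule unique)
  with s S show ?thesis by (simp add: line_reflection_def field_simps)
qed

lemma quotient_eq_square_div: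
  fixes P P' s s' a :: "'a::field"
  assumes "P * P' = a" "a \<noteq> 0" "s * P' = s' * P" "s' \<noteq> 0"
  shows "s / s' = P ^ 2 / a"
proof -
  have "P \<noteq> 0" "P' \<noteq> 0" using assms(1,2) by auto
  then have "s / s' = P / P'" using assms(3,4) by (simp add: frac_eq_eq mult.commute)
  also have "\<dots> = P ^ 2 / a" using \<open>P \<noteq> 0\<close> by (simp add: power2_eq_square flip: assms(1))
  finally show ?thesis .
qed

lemma same_or_opposite_iff:
  fixes P1 P1' P2 P2' s1 s1' s2 s2' a :: "'a::field"
  assumes "P1 * P1' = a" "P2 * P2' = a" "a \<noteq> 0"
    and "s1 * P1' = s1' * P1" "s2 * P2' = s2' * P2" "s1' \<noteq> 0" "s2' \<noteq> 0"
  shows "(P1 = P2 \<or> P2 = - P1) \<longleftrightarrow> s1 * s2' = s1' * s2"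
proof -
  have "s1 * s2' = s1' * s2 \<longleftrightarrow> s1 / s1' = s2 / s2'"
    using assms(6,7) by (simp add: frac_eq_eq mult.commute)
  also have "\<dots> \<longleftrightarrow> P1 ^ 2 = P2 ^ 2"
    using assms by (simp add: quotient_eq_square_div)
  also have "\<dots> \<longleftrightarrow> P1 = P2 \<or> P2 = - P1"
    by (auto simp: power2_eq_iff)
  finally show ?thesis ..
qed

theorem mainTheorem3:
  fixes p m q :: nat and a b s1 c1 s2 c2 :: "'a::{field,finite}"
  assumes "prime p" and "odd p" and "m \<ge> 1" and "q = p ^ m"
    and "card (UNIV :: 'a set) = q ^ 2"
    and "a \<in> GFq q - {0}" and "b \<in> GFq q - {0}" and "a \<noteq> b"
    and "\<exists>x \<in> GFq q. x ^ 2 = b / a"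
    and "c1 \<in> GFq q - {0}" and "c2 \<in> GFq q - {0}"
    and "circ1 q s1 c1 \<in> tau q a b" and "circ1 q s2 c2 \<in> tau q a b"
  shows "\<forall>P1 P2. Some P1 \<in> circ1 q s1 c1 \<inter> Bcirc q a \<longrightarrow> Some P2 \<in> circ1 q s2 c2 \<inter> Bcirc q a \<longrightarrow>
           (((P1 = P2 \<or> P2 = - P1) \<longleftrightarrow> s1 * conjq q s2 \<in> GFq q - {0})
            \<and> ((P1 = P2 \<or> P2 = - P1) \<longrightarrow>
                 P1 ^ 2 / a = s1 / conjq q s1 \<and> s1 / conjq q s1 = s2 / conjq q s2))"
proof (intro allI impI)
  fix P1 P2
  assume P1: "Some P1 \<in> circ1 q s1 c1 \<inter> Bcirc q a"
    and P2: "Some P2 \<in> circ1 q s2 c2 \<inter> Bcirc q a"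
  have q: "odd q" "q > 0" using assms(2,4) by (simp_all add: odd_pos)
  have a: "a \<noteq> 0" using assms(6) by simp
  have "tangential (circ1 q s1 c1) (Bcirc q a)" "tangential (circ1 q s2 c2) (Bcirc q a)"
    using assms(12,13) by (simp_all add: tau_def)
  with tangent_point_Bcirc[OF assms(5) q(1) a] P1 P2
  have s: "s1 \<noteq> 0" "s2 \<noteq> 0"
    and tangent: "s1 * conjq q P1 = conjq q s1 * P1" "s2 * conjq q P2 = conjq q s2 * P2"
    by blast+
  have S: "conjq q s1 \<noteq> 0" "conjq q s2 \<noteq> 0" using s q(2) by (simp_all add: conjq_eq_0_iff)
  have on_Ba: "P1 * conjq q P1 = a" "P2 * conjq q P2 = a"
    using P1 P2 q(2) by (simp_all add: Some_mem_Bcirc_iff)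
  have "s1 * conjq q s2 \<in> GFq q - {0} \<longleftrightarrow> s1 * conjq q s2 = conjq q s1 * s2"
    using s S mult_conjq_mem_GFq_iff[OF assms(5)] by auto
  moreover have "(P1 = P2 \<or> P2 = - P1) \<longleftrightarrow> s1 * conjq q s2 = conjq q s1 * s2"
    using same_or_opposite_iff[OF on_Ba a tangent S] .
  moreover have "s1 / conjq q s1 = P1 ^ 2 / a" "s2 / conjq q s2 = P2 ^ 2 / a"
    using quotient_eq_square_div on_Ba a tangent S by blast+
  moreover have "P1 = P2 \<or> P2 = - P1 \<Longrightarrow> P1 ^ 2 = P2 ^ 2" by auto
  ultimately show "((P1 = P2 \<or> P2 = - P1) \<longleftrightarrow> s1 * conjq q s2 \<in> GFq q - {0})
            \<and> ((P1 = P2 \<or> P2 = - P1) \<longrightarrow>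
                 P1 ^ 2 / a = s1 / conjq q s1 \<and> s1 / conjq q s1 = s2 / conjq q s2)"
    by metis
qed

end
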